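(* Fix nonnegative real parameters $k^A,k^B,t^A,t^B$ and let $cost(a,b,s)$ be as in the context. Then: (1) for fixed integers $a,b\ge 0$, the function $s\mapsto cost(a,b,s)$ on integers $s\ge 0$ is convex, i.e. its difference function $cost(a,b,s+1)-cost(a,b,s)$ is non-decreasing in $s$; (2) for fixed integers $s,a\ge 0$, the function $b\mapsto cost(a,b,s)$ is non-decreasing on integers $b\ge 0$; (3) for fixed integers $s,b\ge 0$, the function $a\mapsto cost(a,b,s)$ is non-decreasing on integers $a\ge 0$; (4) the function $x\mapsto cost(x,x+1,x+1)$ is non-decreasing on integers $x\ge 0$.
   Context: For integers $a,s\ge 0$ define $cost^A(a,s)=\min\{s\,t^A+k^A(x_1^2+\dots+x_s^2) : x_1+\dots+x_s=a,\ x_i\in\mathbb{Z}_{\ge 0}\}$, with $cost^A(0,0)=0$ and $cost^A(a,0)=+\infty$ for $a>0$; $cost^B(b,s)$ is defined analogously with $t^B,k^B$. Define $mcost^A(a,s)=\min\{cost^A(a,s') : s'\in\{s-1,s,s+1\},\ s'\ge 0\}$ and $cost(a,b,s)=cost^B(b,s)+mcost^A(a,s)$, with the usual conventions for $+\infty$. "Increasing" in the paper means non-decreasing. *)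

theory Defs
  imports Complex_Main "HOL-Library.Extended_Real"
begin

text \<open>The infimum over the empty set is +infinity (the case s = 0, a > 0),
  and for s = 0, a = 0 the only (empty) choice gives 0.\<close>
definition cost_single :: "real \<Rightarrow> real \<Rightarrow> nat \<Rightarrow> nat \<Rightarrow> ereal" where
  "cost_single t k a s =
     (INF x \<in> {x :: nat \<Rightarrow> nat. (\<Sum>i<s. x i) = a}.
        ereal (real s * t + k * (\<Sum>i<s. (real (x i))^2)))"

definition mcost :: "real \<Rightarrow> real \<Rightarrow> nat \<Rightarrow> nat \<Rightarrow> ereal" where
  "mcost t k a s = min (cost_single t k a (s - 1)) (min (cost_single t k a s) (cost_single t k a (s + 1)))"

definition cost :: "real \<Rightarrow> real \<Rightarrow> real \<Rightarrow> real \<Rightarrow> nat \<Rightarrow> nat \<Rightarrow> nat \<Rightarrow> ereal" where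
  "cost tA kA tB kB a b s = cost_single tB kB b s + mcost tA kA a s"

end

theory Submission imports Defs begin

text \<open>For \<open>s > 0\<close> the cheapest way to split \<open>b\<close> into \<open>s\<close> parts is the balanced one.
  Its sum of squares is \<open>G(b,s) = max\<^sub>q ((2q+1) b - q(q+1) s)\<close>, because on integers
  \<open>x\<^sup>2 \<ge> (2q+1) x - q(q+1)\<close> with equality for \<open>x \<in> {q, q+1}\<close>. As a maximum of functions that
  are affine in \<open>s\<close> and increasing in \<open>b\<close>, \<open>G\<close> is convex in \<open>s\<close> and increasing in \<open>b\<close>.
  The infinite value of \<open>cost\<^sup>A(a,0)\<close> is replaced by a finite one that keeps the sequence
  convex without changing any of the minima in \<open>mcost\<^sup>A\<close>, and the minimum over a sliding
  window of three consecutive terms of a convex sequence is again convex.\<close>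

definition min_sq_sum :: "nat \<Rightarrow> nat \<Rightarrow> real" where
  "min_sq_sum b s = real s * (real (b div s))\<^sup>2 + real (b mod s) * (2 * real (b div s) + 1)"

lemma tangent_le_square: "(2 * real q + 1) * real x - real q * (real q + 1) \<le> (real x)\<^sup>2"
proof -
  have "(real x - real q) * (real x - real q - 1) \<ge> 0"
    by (cases "x \<le> q") (auto intro: mult_nonpos_nonpos mult_nonneg_nonneg)
  then show ?thesis by (simp add: algebra_simps power2_eq_square)
qed

lemma sum_squares_ge_tangent:
  assumes "(\<Sum>i<s. x i) = b"
  shows "(2 * real q + 1) * real b - real q * (real q + 1) * real s \<le> (\<Sum>i<s. (real (x i))\<^sup>2)"
proof -
  have "real b = (\<Sum>i<s. real (x i))"
    using assms by auto
  then have "(2 * real q + 1) * real b - real q * (real q + 1) * real s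
      = (\<Sum>i<s. (2 * real q + 1) * real (x i) - real q * (real q + 1))"
    by (simp add: sum_subtractf sum_distrib_left)
  also have "\<dots> \<le> (\<Sum>i<s. (real (x i))\<^sup>2)"
    by (intro sum_mono tangent_le_square)
  finally show ?thesis .
qed

lemma min_sq_sum_tangent_form:
  "min_sq_sum b s = (2 * real (b div s) + 1) * real b - real (b div s) * (real (b div s) + 1) * real s"
proof -
  have "real b = real s * real (b div s) + real (b mod s)"
    by (metis div_mult_mod_eq of_nat_add of_nat_mult mult.commute)
  then show ?thesis
    unfolding min_sq_sum_def by (simp add: algebra_simps power2_eq_square)
qed

lemma balanced_partition:
  assumes "s > 0"
  obtains x :: "nat \<Rightarrow> nat"
  where "(\<Sum>i<s. x i) = b" and "(\<Sum>i<s. (real (x i))\<^sup>2) = min_sq_sum b s"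
proof
  define x where "x i = b div s + (if i < b mod s then 1 else 0)" for i
  have short_parts: "{..<s} \<inter> {i. i < b mod s} = {..<b mod s}"
    using mod_less_divisor[OF assms, of b] by auto
  have "(\<Sum>i<s. x i) = s * (b div s) + (\<Sum>i<s. if i < b mod s then 1 else 0)"
    unfolding x_def by (simp add: sum.distrib)
  also have "(\<Sum>i<s. if i < b mod s then 1 else 0 :: nat) = b mod s"
    by (simp add: sum.If_cases short_parts)
  finally show "(\<Sum>i<s. x i) = b"
    by (metis div_mult_mod_eq mult.commute)
  have "(real (x i))\<^sup>2 = (real (b div s))\<^sup>2 + (if i < b mod s then 2 * real (b div s) + 1 else 0)"
    for i unfolding x_def by (simp add: power2_eq_square algebra_simps)
  then have "(\<Sum>i<s. (real (x i))\<^sup>2)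
      = real s * (real (b div s))\<^sup>2 + (\<Sum>i<s. if i < b mod s then 2 * real (b div s) + 1 else 0)"
    by (simp add: sum.distrib)
  also have "(\<Sum>i<s. if i < b mod s then 2 * real (b div s) + 1 else 0)
      = real (b mod s) * (2 * real (b div s) + 1)"
    by (simp add: sum.If_cases short_parts)
  finally show "(\<Sum>i<s. (real (x i))\<^sup>2) = min_sq_sum b s"
    unfolding min_sq_sum_def .
qed

lemma min_sq_sum_ge_tangent:
  assumes "s > 0"
  shows "(2 * real q + 1) * real b - real q * (real q + 1) * real s \<le> min_sq_sum b s"
proof -
  obtain x where "(\<Sum>i<s. x i) = b" and "(\<Sum>i<s. (real (x i))\<^sup>2) = min_sq_sum b s"
    using balanced_partition[OF assms] .
  then show ?thesis
    using sum_squares_ge_tangent by metis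
qed

lemma min_sq_sum_convex:
  assumes "s > 0"
  shows "2 * min_sq_sum b (s + 1) \<le> min_sq_sum b s + min_sq_sum b (s + 2)"
proof -
  define q where "q = b div (s + 1)"
  have "min_sq_sum b (s + 1) = (2 * real q + 1) * real b - real q * (real q + 1) * real (s + 1)"
    unfolding q_def by (rule min_sq_sum_tangent_form)
  moreover have "(2 * real q + 1) * real b - real q * (real q + 1) * real s \<le> min_sq_sum b s"
    using min_sq_sum_ge_tangent[OF assms] .
  moreover have "(2 * real q + 1) * real b - real q * (real q + 1) * real (s + 2) \<le> min_sq_sum b (s + 2)"
    using min_sq_sum_ge_tangent[of "s + 2"] by simp
  ultimately show ?thesis
    by (simp add: algebra_simps)
qed

lemma min_sq_sum_mono:
  assumes "s > 0"
  shows "min_sq_sum b s \<le> min_sq_sum (b + 1) s"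
proof -
  define q where "q = b div s"
  have "min_sq_sum b s = (2 * real q + 1) * real b - real q * (real q + 1) * real s"
    unfolding q_def by (rule min_sq_sum_tangent_form)
  moreover have "(2 * real q + 1) * real (b + 1) - real q * (real q + 1) * real s \<le> min_sq_sum (b + 1) s"
    using min_sq_sum_ge_tangent[OF assms] .
  ultimately show ?thesis
    by (simp add: algebra_simps)
qed

lemma min_sq_sum_eq_self: "s > 0 \<Longrightarrow> b \<le> s \<Longrightarrow> min_sq_sum b s = real b"
  by (cases "b = s") (auto simp: min_sq_sum_def)

lemma min_sq_sum_zero [simp]: "min_sq_sum 0 s = 0"
  by (simp add: min_sq_sum_def)

lemma cost_single_eq:
  assumes "s > 0 \<or> b = 0" and "k \<ge> 0"
  shows "cost_single t k b s = ereal (real s * t + k * min_sq_sum b s)"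
proof (cases "s = 0")
  case True
  with assms show ?thesis
    by (simp add: cost_single_def)
next
  case False
  then have "s > 0" by simp
  let ?c = "\<lambda>x. ereal (real s * t + k * (\<Sum>i<s. (real (x i))\<^sup>2))"
  show ?thesis unfolding cost_single_def
  proof (rule antisym)
    obtain x where "(\<Sum>i<s. x i) = b" and "(\<Sum>i<s. (real (x i))\<^sup>2) = min_sq_sum b s"
      using balanced_partition[OF \<open>s > 0\<close>] .
    then show "(INF x\<in>{x. (\<Sum>i<s. x i) = b}. ?c x) \<le> ereal (real s * t + k * min_sq_sum b s)"
      by (intro INF_lower2[of x]) auto
  next
    show "ereal (real s * t + k * min_sq_sum b s) \<le> (INF x\<in>{x. (\<Sum>i<s. x i) = b}. ?c x)"
    proof (rule INF_greatest)
      fix x assume "x \<in> {x. (\<Sum>i<s. x i) = b}"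
      then have "min_sq_sum b s \<le> (\<Sum>i<s. (real (x i))\<^sup>2)"
        using sum_squares_ge_tangent[of x s b "b div s"] by (simp add: min_sq_sum_tangent_form)
      with assms(2) show "ereal (real s * t + k * min_sq_sum b s) \<le> ?c x"
        by (simp add: mult_left_mono)
    qed
  qed
qed

lemma cost_single_zero_eq_infinity: "b > 0 \<Longrightarrow> cost_single t k b 0 = \<infinity>"
  by (simp add: cost_single_def top_ereal_def[symmetric])

lemma cost_single_mono:
  assumes "k \<ge> 0"
  shows "cost_single t k b s \<le> cost_single t k (b + 1) s"
proof (cases "s = 0")
  case True
  then show ?thesis
    by (cases "b = 0") (simp_all add: cost_single_zero_eq_infinity)
next
  case False
  with assms show ?thesis
    using cost_single_eq[of s b k t] cost_single_eq[of s "b + 1" k t] min_sq_sum_mono[of s b]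
    by (simp add: mult_left_mono)
qed

definition discrete_convex :: "(nat \<Rightarrow> real) \<Rightarrow> bool" where
  "discrete_convex g \<longleftrightarrow> (\<forall>s. 2 * g (s + 1) \<le> g s + g (s + 2))"

definition window_min :: "(nat \<Rightarrow> real) \<Rightarrow> nat \<Rightarrow> real" where
  "window_min g s = min (g (s - 1)) (min (g s) (g (s + 1)))"

lemma discrete_convex_window_min:
  assumes "discrete_convex g"
  shows "discrete_convex (window_min g)"
  unfolding discrete_convex_def
proof
  fix s
  show "2 * window_min g (s + 1) \<le> window_min g s + window_min g (s + 2)"
  proof (cases s)
    case 0
    have "2 * g 1 \<le> g 0 + g 2" "2 * g 2 \<le> g 1 + g 3"
      using assms unfolding discrete_convex_def by (simp_all add: numeral_eq_Suc)
    with 0 show ?thesis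
      unfolding window_min_def by (auto simp: min_def numeral_eq_Suc)
  next
    case (Suc m)
    have "2 * g (m + 1) \<le> g m + g (m + 2)" "2 * g (m + 2) \<le> g (m + 1) + g (m + 3)"
      "2 * g (m + 3) \<le> g (m + 2) + g (m + 4)"
      using assms unfolding discrete_convex_def by (simp_all add: numeral_eq_Suc)
    with Suc show ?thesis
      unfolding window_min_def by (auto simp: min_def numeral_eq_Suc)
  qed
qed

definition finite_cost :: "real \<Rightarrow> real \<Rightarrow> nat \<Rightarrow> nat \<Rightarrow> real" where
  "finite_cost t k a s = real s * t + k * min_sq_sum a s"

text \<open>The value at \<open>s = 0\<close> stands in for \<open>\<infinity>\<close>: being at least \<open>finite_cost t k a 1\<close> it never
  attains a window minimum, and being at least \<open>2 f(1) - f(2)\<close> it keeps the sequence convex.\<close>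

definition completed_cost :: "real \<Rightarrow> real \<Rightarrow> nat \<Rightarrow> nat \<Rightarrow> real" where
  "completed_cost t k a s =
    (if s = 0 \<and> a > 0
     then max (finite_cost t k a 1) (2 * finite_cost t k a 1 - finite_cost t k a 2)
     else finite_cost t k a s)"

lemma finite_cost_convex:
  assumes "k \<ge> 0" and "s > 0 \<or> a = 0"
  shows "2 * finite_cost t k a (s + 1) \<le> finite_cost t k a s + finite_cost t k a (s + 2)"
proof (cases "a = 0")
  case True
  then show ?thesis
    by (simp add: finite_cost_def algebra_simps)
next
  case False
  with assms have "k * (2 * min_sq_sum a (s + 1)) \<le> k * (min_sq_sum a s + min_sq_sum a (s + 2))"
    by (intro mult_left_mono min_sq_sum_convex) auto
  then show ?thesis
    by (simp add: finite_cost_def algebra_simps)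
qed

lemma discrete_convex_completed_cost:
  assumes "k \<ge> 0"
  shows "discrete_convex (completed_cost t k a)"
  unfolding discrete_convex_def
proof
  fix s
  show "2 * completed_cost t k a (s + 1) \<le> completed_cost t k a s + completed_cost t k a (s + 2)"
  proof (cases "s = 0 \<and> a > 0")
    case True
    then show ?thesis
      by (simp add: completed_cost_def numeral_2_eq_2)
  next
    case False
    then show ?thesis
      using finite_cost_convex[OF assms, of s a t] by (auto simp: completed_cost_def)
  qed
qed

lemma mcost_eq_window_min:
  assumes "k \<ge> 0"
  shows "mcost t k a s = ereal (window_min (completed_cost t k a) s)"
proof (cases "a = 0")
  case True
  with assms show ?thesis
    by (simp add: mcost_def window_min_def completed_cost_def finite_cost_def cost_single_eq ereal_min)
next
  case False
  then have "a > 0" by simp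
  have completed_zero: "completed_cost t k a 0 \<ge> finite_cost t k a 1"
    using \<open>a > 0\<close> by (simp add: completed_cost_def)
  have completed: "completed_cost t k a s = finite_cost t k a s" if "s > 0" for s
    using that by (simp add: completed_cost_def)
  have finite: "cost_single t k a s = ereal (finite_cost t k a s)" if "s > 0" for s
    using that cost_single_eq assms by (simp add: finite_cost_def)
  consider "s = 0" | "s = 1" | "s \<ge> 2" by linarith
  then show ?thesis
  proof cases
    case 1
    with \<open>a > 0\<close> show ?thesis
      using completed_zero finite[of 1] completed[of 1]
      by (simp add: mcost_def window_min_def cost_single_zero_eq_infinity)
  next
    case 2
    with \<open>a > 0\<close> show ?thesis
      using completed_zero finite[of 1] completed[of 1] finite[of 2] completed[of 2]
      by (simp add: mcost_def window_min_def cost_single_zero_eq_infinity ereal_min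
          min.assoc[symmetric] numeral_2_eq_2)
  next
    case 3
    then show ?thesis
      using finite[of "s - 1"] completed[of "s - 1"] finite[of s] completed[of s]
        finite[of "s + 1"] completed[of "s + 1"]
      by (simp add: mcost_def window_min_def ereal_min)
  qed
qed

lemma cost_eq:
  assumes "kA \<ge> 0" "kB \<ge> 0" "s > 0 \<or> b = 0"
  shows "cost tA kA tB kB a b s = ereal (finite_cost tB kB b s + window_min (completed_cost tA kA a) s)"
  using assms by (simp add: cost_def mcost_eq_window_min cost_single_eq finite_cost_def)

lemma cost_zero_eq_infinity:
  assumes "kA \<ge> 0" "b > 0"
  shows "cost tA kA tB kB a b 0 = \<infinity>"
  using assms by (simp add: cost_def mcost_eq_window_min cost_single_zero_eq_infinity)

lemma cost_convex:
  assumes "kA \<ge> 0" "kB \<ge> 0"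
  shows "mono (\<lambda>s. cost tA kA tB kB a b (s + 1) - cost tA kA tB kB a b s)"
  unfolding mono_iff_le_Suc
proof
  fix s
  show "cost tA kA tB kB a b (s + 1) - cost tA kA tB kB a b s
      \<le> cost tA kA tB kB a b (Suc s + 1) - cost tA kA tB kB a b (Suc s)"
  proof (cases "s = 0 \<and> b > 0")
    case True
    then show ?thesis
      using assms cost_zero_eq_infinity[of kA b] cost_eq[of kA kB 1 b] by simp
  next
    case False
    then have "s > 0 \<or> b = 0" by auto
    have "2 * window_min (completed_cost tA kA a) (s + 1)
        \<le> window_min (completed_cost tA kA a) s + window_min (completed_cost tA kA a) (s + 2)"
      using discrete_convex_window_min[OF discrete_convex_completed_cost[OF assms(1)]]
      unfolding discrete_convex_def by blast
    moreover have "2 * finite_cost tB kB b (s + 1) \<le> finite_cost tB kB b s + finite_cost tB kB b (s + 2)"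
      using finite_cost_convex[OF assms(2) \<open>s > 0 \<or> b = 0\<close>] .
    ultimately show ?thesis
      using cost_eq[OF assms \<open>s > 0 \<or> b = 0\<close>] cost_eq[OF assms, of "s + 1" b]
        cost_eq[OF assms, of "s + 2" b]
      by (simp add: numeral_2_eq_2)
  qed
qed

lemma cost_diagonal_eq:
  assumes "kA \<ge> 0" "kB \<ge> 0" "tA \<ge> 0"
  shows "cost tA kA tB kB x (x + 1) (x + 1) = ereal (real x * (tA + kA) + real (x + 1) * (tB + kB))"
proof -
  have cost_A: "cost_single tA kA x s = ereal (real s * tA + kA * real x)"
    if "x \<le> s" "s > 0 \<or> x = 0" for s
    using cost_single_eq[OF that(2) assms(1)] min_sq_sum_eq_self[of s x] that by auto
  have "mcost tA kA x (x + 1)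
      = min (cost_single tA kA x x) (min (cost_single tA kA x (x + 1)) (cost_single tA kA x (x + 2)))"
    by (simp add: mcost_def numeral_2_eq_2)
  also have "\<dots> = ereal (real x * tA + kA * real x)"
    using cost_A[of x] cost_A[of "x + 1"] cost_A[of "x + 2"] assms(3)
    by (cases "x = 0") (auto simp: min_def algebra_simps)
  finally show ?thesis
    using assms(2) cost_single_eq[of "x + 1" "x + 1" kB tB] min_sq_sum_eq_self[of "x + 1" "x + 1"]
    by (simp add: cost_def algebra_simps)
qed

theorem lemma3:
  fixes kA kB tA tB :: real
  assumes "kA \<ge> 0" "kB \<ge> 0" "tA \<ge> 0" "tB \<ge> 0"
  shows "(\<forall>a b. mono (\<lambda>s. cost tA kA tB kB a b (s + 1) - cost tA kA tB kB a b s))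
    \<and> (\<forall>s a. mono (\<lambda>b. cost tA kA tB kB a b s))
    \<and> (\<forall>s b. mono (\<lambda>a. cost tA kA tB kB a b s))
    \<and> (mono (\<lambda>x. cost tA kA tB kB x (x + 1) (x + 1)))"
proof (intro conjI allI)
  show "mono (\<lambda>s. cost tA kA tB kB a b (s + 1) - cost tA kA tB kB a b s)" for a b
    using cost_convex[OF assms(1,2)] .
  show "mono (\<lambda>b. cost tA kA tB kB a b s)" for s a
    unfolding mono_iff_le_Suc cost_def
    using cost_single_mono[OF assms(2)] by (simp add: add_right_mono)
  show "mono (\<lambda>a. cost tA kA tB kB a b s)" for s b
    unfolding mono_iff_le_Suc cost_def mcost_def
    using cost_single_mono[OF assms(1)] by (auto intro!: add_left_mono min.mono)
  show "mono (\<lambda>x. cost tA kA tB kB x (x + 1) (x + 1))"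
    unfolding mono_iff_le_Suc cost_diagonal_eq[OF assms(1-3)]
    using assms by (simp add: algebra_simps add_mono)
qed

end
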